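(* Let $G$ be an abelian group and let $A$ be a commutative unital Banach algebra with unit $1_A$ possessing a unique maximal ideal. Let $C=(C(g))_{g\in G}$ be a bounded cosine family in $A$, i.e. $C(0)=1_A$, $C(g+h)+C(g-h)=2C(g)C(h)$ for all $g,h\in G$, and $\sup_{g\in G}\Vert C(g)\Vert<\infty$. Then $C$ is scalar: there exists a bounded cosine family $(c(g))_{g\in G}$ with values in $[-1,1]$ such that $C(g)=c(g)1_A$ for all $g\in G$. *)

theory Defs
  imports "HOL-Analysis.Analysis"
begin

definition ring_ideal :: "'a::comm_ring_1 set \<Rightarrow> bool" where
  "ring_ideal I \<longleftrightarrow> 0 \<in> I \<and> (\<forall>x\<in>I. \<forall>y\<in>I. x + y \<in> I) \<and> (\<forall>x\<in>I. - x \<in> I)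
     \<and> (\<forall>a. \<forall>x\<in>I. a * x \<in> I)"

definition maximal_ideal :: "'a::comm_ring_1 set \<Rightarrow> bool" where
  "maximal_ideal M \<longleftrightarrow> ring_ideal M \<and> M \<noteq> UNIV \<and>
     (\<forall>J. ring_ideal J \<and> M \<subseteq> J \<and> J \<noteq> UNIV \<longrightarrow> J = M)"

text \<open>A real unital Banach algebra carries the structure of a complex Banach algebra
  (compatible with its real structure and norm): there is an element j with
  j * j = -1 such that (a + ib) . x := a x + b (j x) is norm-homogeneous.\<close>
definition complex_algebra_structure :: "'a::real_normed_algebra_1 itself \<Rightarrow> bool" where
  "complex_algebra_structure _ \<longleftrightarrow> (\<exists>j::'a. j * j = - 1 \<and>
     (\<forall>a b x. norm (a *\<^sub>R x + b *\<^sub>R (j * x)) = cmod (Complex a b) * norm x))"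

definition cosine_family :: "('g::ab_group_add \<Rightarrow> 'a::real_normed_algebra_1) \<Rightarrow> bool" where
  "cosine_family C \<longleftrightarrow> C 0 = 1 \<and> (\<forall>g h. C (g + h) + C (g - h) = 2 * C g * C h)"

definition bounded_family :: "('g \<Rightarrow> 'a::real_normed_vector) \<Rightarrow> bool" where
  "bounded_family C \<longleftrightarrow> (\<exists>M. \<forall>g. norm (C g) \<le> M)"

end

theory Submission
  imports Defs "HOL-Complex_Analysis.Complex_Analysis"
begin

text \<open>Fix \<open>g\<close> and put \<open>y = C g\<close>. The cosine equation gives \<open>C (n g) = T\<^sub>n(y)\<close> for the
  Chebyshev polynomials \<open>T\<^sub>n\<close>, so the sequence \<open>T\<^sub>n(y)\<close> is bounded. Then the generating function
  \<open>\<Sum> U\<^sub>n(y) z\<^sup>n = 1 / (1 - 2 y z + z\<^sup>2)\<close> converges for \<open>|z| < 1\<close> and inverts \<open>\<zeta> - y\<close> for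
  \<open>\<zeta> = (z + 1/z) / 2\<close>: the spectrum of \<open>y\<close> lies in \<open>[-1, 1]\<close>, with an explicit resolvent
  bound off the real axis. By Liouville's theorem the spectrum contains some \<open>c\<close>; then
  \<open>u = y - c\<close> is not invertible, hence lies in the unique maximal ideal, so \<open>1 - s u\<close> is
  invertible for every \<open>s\<close>. The resolvent bound becomes a growth bound on circles which, through
  Cauchy's formula, forces \<open>\<psi> (u\<^sup>2) = 0\<close> for every bounded functional \<open>\<psi>\<close>, i.e. \<open>u\<^sup>2 = 0\<close>.
  Finally \<open>T\<^sub>n(c + u) = T\<^sub>n(c) + n U\<^sub>n\<^sub>-\<^sub>1(c) u\<close>, and the Wronskian of \<open>T\<close> and \<open>U\<close> makes
  \<open>n U\<^sub>n\<^sub>-\<^sub>1(c)\<close> unbounded, so \<open>u = 0\<close>.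

  Functionals on the real Banach algebra are produced by a Hahn--Banach argument and made
  complex-linear using the given complex structure.\<close>

section \<open>Chebyshev polynomials\<close>

fun chebyshev_T :: "nat \<Rightarrow> 'a::comm_ring_1 \<Rightarrow> 'a" where
  "chebyshev_T 0 x = 1"
| "chebyshev_T (Suc 0) x = x"
| "chebyshev_T (Suc (Suc n)) x = 2 * x * chebyshev_T (Suc n) x - chebyshev_T n x"

text \<open>Shifted indexing: \<open>chebyshev_U n\<close> is the polynomial of the second kind usually written
  \<open>U\<^sub>n\<^sub>-\<^sub>1\<close>, so that \<open>chebyshev_U 0 = 0\<close>.\<close>
fun chebyshev_U :: "nat \<Rightarrow> 'a::comm_ring_1 \<Rightarrow> 'a" where
  "chebyshev_U 0 x = 0"
| "chebyshev_U (Suc 0) x = 1"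
| "chebyshev_U (Suc (Suc n)) x = 2 * x * chebyshev_U (Suc n) x - chebyshev_U n x"

lemma chebyshev_recurrence_unique:
  fixes f g :: "nat \<Rightarrow> 'a::comm_ring_1"
  assumes "\<And>n. f (Suc (Suc n)) = 2 * x * f (Suc n) - f n"
    and "\<And>n. g (Suc (Suc n)) = 2 * x * g (Suc n) - g n"
    and "f 0 = g 0" and "f (Suc 0) = g (Suc 0)"
  shows "f n = g n"
  by (induction n rule: induct_nat_012) (simp_all add: assms)

lemma chebyshev_U_Suc_Suc_eq_T: "chebyshev_U (Suc (Suc n)) x = chebyshev_U n x + 2 * chebyshev_T (Suc n) x"
  by (rule chebyshev_recurrence_unique[where x = x]) (simp_all add: algebra_simps)

lemma chebyshev_T_Suc_eq_U: "chebyshev_T (Suc n) x = x * chebyshev_U (Suc n) x - chebyshev_U n x"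
  by (rule chebyshev_recurrence_unique[where x = x]) (simp_all add: algebra_simps)

lemma chebyshev_wronskian:
  "chebyshev_U (Suc n) x * chebyshev_T n x - chebyshev_U n x * chebyshev_T (Suc n) x = 1"
proof (induction n)
  case (Suc n)
  then show ?case by (simp add: algebra_simps)
qed simp

text \<open>First-order Taylor expansion: \<open>n U\<^sub>n\<^sub>-\<^sub>1\<close> is the derivative of \<open>T\<^sub>n\<close>.\<close>
lemma chebyshev_T_add_square_zero:
  fixes x u :: "'a::comm_ring_1"
  assumes "u * u = 0"
  shows "chebyshev_T n (x + u) = chebyshev_T n x + of_nat n * chebyshev_U n x * u"
proof (rule chebyshev_recurrence_unique[where x = "x + u"])
  have uu: "u * (u * z) = 0" for z using assms by (simp add: mult.assoc[symmetric])
  show "chebyshev_T (Suc (Suc n)) x + of_nat (Suc (Suc n)) * chebyshev_U (Suc (Suc n)) x * u =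
    2 * (x + u) * (chebyshev_T (Suc n) x + of_nat (Suc n) * chebyshev_U (Suc n) x * u)
    - (chebyshev_T n x + of_nat n * chebyshev_U n x * u)" for n
    by (simp add: chebyshev_T_Suc_eq_U[of n] algebra_simps uu)
qed simp_all

lemma chebyshev_U_generating_partial:
  fixes x w :: "'a::comm_ring_1"
  shows "(1 - 2 * x * w + w\<^sup>2) * (\<Sum>n<m. chebyshev_U (Suc n) x * w ^ n)
        = 1 - chebyshev_U (Suc m) x * w ^ m + chebyshev_U m x * w ^ Suc m"
proof (induction m)
  case (Suc m)
  then show ?case
    by (simp add: algebra_simps power2_eq_square)
qed simp

lemma of_real_chebyshev_T:
  "of_real (chebyshev_T n c) = (chebyshev_T n (of_real c) :: 'a::{real_algebra_1, comm_ring_1})"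
  by (induction n rule: induct_nat_012) simp_all

lemma of_real_chebyshev_U:
  "of_real (chebyshev_U n c) = (chebyshev_U n (of_real c) :: 'a::{real_algebra_1, comm_ring_1})"
  by (induction n rule: induct_nat_012) simp_all

lemma chebyshev_T_cos: "chebyshev_T n (cos \<theta>) = cos (real n * \<theta>)"
proof (induction n rule: induct_nat_012)
  case (ge2 n)
  have "cos (real (Suc (Suc n)) * \<theta>) = 2 * cos \<theta> * cos (real (Suc n) * \<theta>) - cos (real n * \<theta>)"
    using cos_add[of "real (Suc n) * \<theta>" \<theta>] cos_diff[of "real (Suc n) * \<theta>" \<theta>]
    by (simp add: algebra_simps)
  with ge2 show ?case by simp
qed simp_all

lemma abs_chebyshev_T_le_one: "\<bar>c::real\<bar> \<le> 1 \<Longrightarrow> \<bar>chebyshev_T n c\<bar> \<le> 1"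
  using chebyshev_T_cos[of n "arccos c"] by simp

lemma abs_chebyshev_U_lower_bound:
  fixes c :: real
  assumes "\<bar>c\<bar> \<le> 1"
  shows "1 \<le> \<bar>chebyshev_U (Suc n) c\<bar> + \<bar>chebyshev_U n c\<bar>"
proof -
  have "1 = \<bar>chebyshev_U (Suc n) c * chebyshev_T n c - chebyshev_U n c * chebyshev_T (Suc n) c\<bar>"
    by (simp add: chebyshev_wronskian)
  also have "\<dots> \<le> \<bar>chebyshev_U (Suc n) c\<bar> * \<bar>chebyshev_T n c\<bar> + \<bar>chebyshev_U n c\<bar> * \<bar>chebyshev_T (Suc n) c\<bar>"
    unfolding abs_mult[symmetric] by (rule abs_triangle_ineq4)
  also have "\<dots> \<le> \<bar>chebyshev_U (Suc n) c\<bar> + \<bar>chebyshev_U n c\<bar>"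
    using abs_chebyshev_T_le_one[OF assms] by (intro add_mono mult_left_le) auto
  finally show ?thesis .
qed

lemma chebyshev_U_generating_function:
  fixes x w :: "'a::{real_normed_algebra_1, comm_ring_1}"
  assumes "summable (\<lambda>n. chebyshev_U (Suc n) x * w ^ n)"
  shows "(1 - 2 * x * w + w\<^sup>2) * (\<Sum>n. chebyshev_U (Suc n) x * w ^ n) = 1"
proof -
  define f where "f = (\<lambda>n. chebyshev_U (Suc n) x * w ^ n)"
  define D where "D = 1 - 2 * x * w + w\<^sup>2"
  have partial: "D * (\<Sum>n<Suc m. f n) = 1 - f (Suc m) + f m * w\<^sup>2" for m
    using chebyshev_U_generating_partial[of x w "Suc m"] by (simp add: D_def f_def power2_eq_square mult_ac)
  have "(\<lambda>m. D * (\<Sum>n<Suc m. f n)) \<longlonglongrightarrow> D * suminf f"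
    using assms unfolding f_def by (intro tendsto_mult_left LIMSEQ_Suc summable_LIMSEQ)
  then have "(\<lambda>m. 1 - f (Suc m) + f m * w\<^sup>2) \<longlonglongrightarrow> D * suminf f"
    by (simp only: partial)
  moreover have "(\<lambda>m. 1 - f (Suc m) + f m * w\<^sup>2) \<longlonglongrightarrow> 1 - 0 + 0 * w\<^sup>2"
    using summable_LIMSEQ_zero[OF assms] unfolding f_def[symmetric]
    by (intro tendsto_intros LIMSEQ_Suc)
  ultimately have "D * suminf f = 1"
    by (simp add: LIMSEQ_unique)
  then show ?thesis
    by (simp add: D_def f_def)
qed

lemma cosine_family_multiple:
  assumes "cosine_family C"
  shows "C (\<Sum>i<n. g) = chebyshev_T n (C g)"
proof (induction n rule: induct_nat_012)
  case (ge2 n)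
  have "C ((\<Sum>i<Suc n. g) + g) + C ((\<Sum>i<Suc n. g) - g) = 2 * C (\<Sum>i<Suc n. g) * C g"
    using assms unfolding cosine_family_def by blast
  with ge2 show ?case by (simp add: algebra_simps)
qed (use assms in \<open>simp_all add: cosine_family_def\<close>)

lemma chebyshev_bounded_square_zero_eq_0:
  fixes u :: "'a::{real_normed_algebra_1, comm_ring_1}"
  assumes c: "\<bar>c\<bar> \<le> 1" and "u * u = 0" and bounded: "\<And>n. norm (chebyshev_T n (of_real c + u)) \<le> K"
  shows "u = 0"
proof -
  have expansion: "chebyshev_T n (of_real c + u) = of_real (chebyshev_T n c) + (real n * chebyshev_U n c) *\<^sub>R u" for n
    using chebyshev_T_add_square_zero[OF \<open>u * u = 0\<close>, of n "of_real c"]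
    by (simp add: of_real_chebyshev_T of_real_chebyshev_U scaleR_conv_of_real)
  text \<open>The first-order term \<open>n U\<^sub>n\<^sub>-\<^sub>1(c) u\<close> stays bounded, which the Wronskian lower bound forbids.\<close>
  have first_order: "\<bar>real n * chebyshev_U n c\<bar> * norm u \<le> K + 1" for n
  proof -
    have "\<bar>real n * chebyshev_U n c\<bar> * norm u = norm (chebyshev_T n (of_real c + u) - of_real (chebyshev_T n c))"
      unfolding expansion by simp
    also have "\<dots> \<le> K + 1"
      using norm_triangle_ineq4[of "chebyshev_T n (of_real c + u)" "of_real (chebyshev_T n c)"]
        bounded[of n] abs_chebyshev_T_le_one[OF c, of n]
      by simp
    finally show ?thesis .
  qed
  have linear: "real n * norm u \<le> 2 * (K + 1)" for n
  proof -
    have "real n * norm u \<le> real n * norm u * (\<bar>chebyshev_U (Suc n) c\<bar> + \<bar>chebyshev_U n c\<bar>)"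
      using mult_left_mono[OF abs_chebyshev_U_lower_bound[OF c, of n], of "real n * norm u"] by simp
    also have "\<dots> = real n * \<bar>chebyshev_U (Suc n) c\<bar> * norm u + \<bar>real n * chebyshev_U n c\<bar> * norm u"
      by (simp add: abs_mult algebra_simps)
    also have "\<dots> \<le> \<bar>real (Suc n) * chebyshev_U (Suc n) c\<bar> * norm u + \<bar>real n * chebyshev_U n c\<bar> * norm u"
      by (intro add_right_mono mult_right_mono) (auto simp: abs_mult mult_right_mono)
    also have "\<dots> \<le> 2 * (K + 1)"
      using first_order[of n] first_order[of "Suc n"] by simp
    finally show ?thesis .
  qed
  show "u = 0"
  proof (rule ccontr)
    assume "u \<noteq> 0"
    then obtain n where "2 * (K + 1) < real n * norm u"
      using ex_less_of_nat_mult[of "norm u"] by auto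
    with linear[of n] show False by simp
  qed
qed

section \<open>Units and maximal ideals\<close>

definition unit_inverse :: "'a::comm_ring_1 \<Rightarrow> 'a" where
  "unit_inverse x = (SOME y. x * y = 1)"

lemma unit_inverse_right:
  fixes x :: "'a::comm_ring_1"
  assumes "x dvd 1"
  shows "x * unit_inverse x = 1"
proof -
  obtain k where "1 = x * k" using assms by (rule dvdE)
  then have "x * k = 1" by simp
  then show ?thesis unfolding unit_inverse_def by (rule someI)
qed

lemma unit_inverse_left: "x dvd 1 \<Longrightarrow> unit_inverse x * (x::'a::comm_ring_1) = 1"
  using unit_inverse_right by (simp add: mult.commute)

lemma unit_inverse_eqI:
  fixes x y :: "'a::comm_ring_1"
  assumes "x * y = 1"
  shows "unit_inverse x = y"
proof -
  have "x dvd 1" using assms by (auto intro: dvdI[of _ _ y])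
  then have "unit_inverse x = unit_inverse x * (x * y)" using assms by simp
  also have "\<dots> = y" using unit_inverse_left[OF \<open>x dvd 1\<close>] by (simp add: mult.assoc[symmetric])
  finally show ?thesis .
qed

lemma resolvent_square_identity:
  fixes a u R :: "'a::comm_ring_1"
  assumes "(1 - a * u) * R = 1"
  shows "a\<^sup>2 * (u * u * R) = R - 1 - a * u"
proof -
  have auR: "a * u * R = R - 1"
    using assms by (simp add: algebra_simps)
  have "a\<^sup>2 * (u * u * R) = a * u * (a * u * R)"
    by (simp add: power2_eq_square mult_ac)
  also have "\<dots> = R - 1 - a * u"
    by (simp add: auR right_diff_distrib)
  finally show ?thesis .
qed

lemma ring_ideal_one_iff:
  assumes "ring_ideal I"
  shows "1 \<in> I \<longleftrightarrow> I = UNIV"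
proof
  assume "1 \<in> I"
  then have "a * 1 \<in> I" for a
    using assms unfolding ring_ideal_def by blast
  then show "I = UNIV" by auto
qed simp

lemma ring_ideal_principal: "ring_ideal (range ((*) (x::'a::comm_ring_1)))"
  unfolding ring_ideal_def
proof (intro conjI ballI allI)
  show "0 \<in> range ((*) x)"
    using rangeI[of "(*) x" 0] by simp
  show "u + v \<in> range ((*) x)" if u: "u \<in> range ((*) x)" and v: "v \<in> range ((*) x)" for u v
  proof -
    obtain a b where "u = x * a" "v = x * b" using u v by blast
    then show ?thesis using rangeI[of "(*) x" "a + b"] by (simp add: distrib_left)
  qed
  show "- u \<in> range ((*) x)" if u: "u \<in> range ((*) x)" for u
  proof -
    obtain a where "u = x * a" using u by blast
    then show ?thesis using rangeI[of "(*) x" "- a"] by simp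
  qed
  show "a * u \<in> range ((*) x)" if u: "u \<in> range ((*) x)" for a u
  proof -
    obtain b where "u = x * b" using u by blast
    then show ?thesis using rangeI[of "(*) x" "a * b"] by (simp add: mult.left_commute)
  qed
qed

lemma ring_ideal_Union_chain:
  assumes "C \<in> chains {I. ring_ideal I \<and> P I}" and "C \<noteq> {}"
  shows "ring_ideal (\<Union>C)"
proof -
  have ideals: "\<And>I. I \<in> C \<Longrightarrow> ring_ideal I" using chainsD2[OF assms(1)] by blast
  have "x + y \<in> \<Union>C" if x: "x \<in> \<Union>C" and y: "y \<in> \<Union>C" for x y
  proof -
    obtain I J where "I \<in> C" "J \<in> C" "x \<in> I" "y \<in> J" using x y by blast
    moreover have "I \<subseteq> J \<or> J \<subseteq> I" using chainsD[OF assms(1) \<open>I \<in> C\<close> \<open>J \<in> C\<close>] .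
    ultimately show ?thesis using ideals unfolding ring_ideal_def by blast
  qed
  moreover have "0 \<in> \<Union>C"
    using assms(2) ideals unfolding ring_ideal_def by blast
  moreover have "- x \<in> \<Union>C" and "a * x \<in> \<Union>C" if "x \<in> \<Union>C" for a x
    using that ideals unfolding ring_ideal_def by blast+
  ultimately show ?thesis
    unfolding ring_ideal_def by blast
qed

lemma nonunit_in_maximal_ideal:
  fixes x :: "'a::comm_ring_1"
  assumes "\<not> x dvd 1"
  shows "\<exists>M. maximal_ideal M \<and> x \<in> M"
proof -
  define \<I> where "\<I> = {I. ring_ideal I \<and> x \<in> I \<and> 1 \<notin> I}"
  have principal: "range ((*) x) \<in> \<I>"
    using ring_ideal_principal[of x] assms unfolding \<I>_def
    by (auto intro: range_eqI[of _ _ 1] simp: dvd_def)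
  have "\<exists>U\<in>\<I>. \<forall>I\<in>C. I \<subseteq> U" if C: "C \<in> chains \<I>" for C
  proof (cases "C = {}")
    case True
    then show ?thesis using principal by blast
  next
    case False
    have "ring_ideal (\<Union>C)"
      using ring_ideal_Union_chain[of C "\<lambda>I. x \<in> I \<and> 1 \<notin> I"] C False \<I>_def by simp
    moreover have "x \<in> \<Union>C" "1 \<notin> \<Union>C"
      using False chainsD2[OF C] unfolding \<I>_def by blast+
    ultimately show ?thesis unfolding \<I>_def by blast
  qed
  then obtain M where "M \<in> \<I>" and max: "\<forall>I\<in>\<I>. M \<subseteq> I \<longrightarrow> I = M"
    using Zorn_Lemma2[of \<I>] by blast
  then have "maximal_ideal M"
    unfolding maximal_ideal_def \<I>_def using ring_ideal_one_iff by blast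
  then show ?thesis using \<open>M \<in> \<I>\<close> unfolding \<I>_def by blast
qed

lemma unique_maximal_ideal_nonunit:
  fixes x :: "'a::comm_ring_1"
  assumes "\<And>M'. maximal_ideal M' \<Longrightarrow> M' = M" and "\<not> x dvd 1"
  shows "x \<in> M"
  using nonunit_in_maximal_ideal[OF assms(2)] assms(1) by blast

lemma unique_maximal_ideal_one_minus_unit:
  fixes v :: "'a::comm_ring_1"
  assumes "maximal_ideal M" and "\<And>M'. maximal_ideal M' \<Longrightarrow> M' = M" and "v \<in> M"
  shows "(1 - v) dvd 1"
proof (rule ccontr)
  assume "\<not> (1 - v) dvd 1"
  then obtain M' where "maximal_ideal M'" and "1 - v \<in> M'"
    using nonunit_in_maximal_ideal[of "1 - v"] by blast
  then have "1 - v \<in> M"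
    using assms(2) by blast
  moreover have "ring_ideal M" and "1 \<notin> M"
    using assms(1) ring_ideal_one_iff unfolding maximal_ideal_def by blast+
  ultimately show False
    using \<open>v \<in> M\<close> unfolding ring_ideal_def by (metis diff_add_cancel)
qed

section \<open>A Hahn--Banach theorem for the norm\<close>

text \<open>Linearity is phrased on pairs, so that single-valuedness
  is a consequence (\<open>norming_graph_functional\<close>) rather than an assumption.\<close>
definition norming_graph :: "'a::real_normed_vector \<Rightarrow> ('a \<times> real) set \<Rightarrow> bool" where
  "norming_graph v G \<longleftrightarrow> (v, norm v) \<in> G
     \<and> (\<forall>x a y b. (x, a) \<in> G \<longrightarrow> (y, b) \<in> G \<longrightarrow> (x + y, a + b) \<in> G)
     \<and> (\<forall>x a r. (x, a) \<in> G \<longrightarrow> (r *\<^sub>R x, r * a) \<in> G)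
     \<and> (\<forall>x a. (x, a) \<in> G \<longrightarrow> a \<le> norm x)"

context
  fixes v :: "'a::real_normed_vector" and G
  assumes G: "norming_graph v G"
begin

lemma norming_graph_add: "(x, a) \<in> G \<Longrightarrow> (y, b) \<in> G \<Longrightarrow> (x + y, a + b) \<in> G"
  and norming_graph_scale: "(x, a) \<in> G \<Longrightarrow> (r *\<^sub>R x, r * a) \<in> G"
  and norming_graph_le: "(x, a) \<in> G \<Longrightarrow> a \<le> norm x"
  and norming_graph_base: "(v, norm v) \<in> G"
  using G unfolding norming_graph_def by blast+

lemma norming_graph_zero: "(0, 0) \<in> G"
  using norming_graph_scale[OF norming_graph_base, of 0] by simp

lemma norming_graph_functional:
  assumes "(x, a) \<in> G" "(x, b) \<in> G"
  shows "a = b"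
proof -
  have "a - b \<le> 0" and "b - a \<le> 0"
    using norming_graph_le[OF norming_graph_add[OF assms(1) norming_graph_scale[OF assms(2), of "-1"]]]
      norming_graph_le[OF norming_graph_add[OF assms(2) norming_graph_scale[OF assms(1), of "-1"]]]
    by simp_all
  then show ?thesis by simp
qed

lemma norming_graph_extension_constant:
  fixes x\<^sub>1 :: 'a
  obtains c where "\<And>y a. (y, a) \<in> G \<Longrightarrow> a - norm (y - x\<^sub>1) \<le> c"
    and "\<And>z b. (z, b) \<in> G \<Longrightarrow> c \<le> norm (z + x\<^sub>1) - b"
proof -
  define S where "S = {a - norm (y - x\<^sub>1) | y a. (y, a) \<in> G}"
  have below: "s \<le> norm (z + x\<^sub>1) - b" if "s \<in> S" "(z, b) \<in> G" for s z b
  proof -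
    obtain y a where s: "s = a - norm (y - x\<^sub>1)" and "(y, a) \<in> G" using \<open>s \<in> S\<close> S_def by blast
    have "a + b \<le> norm (y + z)" using norming_graph_le norming_graph_add \<open>(y, a) \<in> G\<close> that(2) by blast
    also have "\<dots> \<le> norm (y - x\<^sub>1) + norm (z + x\<^sub>1)"
      using norm_triangle_ineq[of "y - x\<^sub>1" "z + x\<^sub>1"] by simp
    finally show ?thesis using s by simp
  qed
  have "S \<noteq> {}" using norming_graph_base S_def by blast
  have "bdd_above S" using below norming_graph_base unfolding bdd_above_def by blast
  show ?thesis
  proof (rule that[of "Sup S"])
    show "a - norm (y - x\<^sub>1) \<le> Sup S" if "(y, a) \<in> G" for y a
      using cSup_upper[OF _ \<open>bdd_above S\<close>] that S_def by blast
    show "Sup S \<le> norm (z + x\<^sub>1) - b" if "(z, b) \<in> G" for z b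
      using cSup_least[OF \<open>S \<noteq> {}\<close>] below that by blast
  qed
qed

lemma norming_graph_extension_dominated:
  assumes lower: "\<And>y a. (y, a) \<in> G \<Longrightarrow> a - norm (y - x\<^sub>1) \<le> c"
    and upper: "\<And>z b. (z, b) \<in> G \<Longrightarrow> c \<le> norm (z + x\<^sub>1) - b"
    and "(y, a) \<in> G"
  shows "a + t * c \<le> norm (y + t *\<^sub>R x\<^sub>1)"
proof (cases t "0::real" rule: linorder_cases)
  case less
  have "a / (- t) - norm (inverse (- t) *\<^sub>R y - x\<^sub>1) \<le> c"
    using lower norming_graph_scale[OF \<open>(y, a) \<in> G\<close>, of "inverse (- t)"] by (simp add: divide_inverse mult.commute)
  moreover have "inverse (- t) *\<^sub>R y - x\<^sub>1 = inverse (- t) *\<^sub>R (y + t *\<^sub>R x\<^sub>1)"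
    using less by (simp add: scaleR_add_right)
  then have "norm (inverse (- t) *\<^sub>R y - x\<^sub>1) = norm (y + t *\<^sub>R x\<^sub>1) / (- t)"
    using less by (simp add: divide_inverse mult.commute)
  ultimately show ?thesis using less by (simp add: field_simps)
next
  case greater
  have "c \<le> norm (inverse t *\<^sub>R y + x\<^sub>1) - a / t"
    using upper norming_graph_scale[OF \<open>(y, a) \<in> G\<close>, of "inverse t"] by (simp add: divide_inverse mult.commute)
  moreover have "inverse t *\<^sub>R y + x\<^sub>1 = inverse t *\<^sub>R (y + t *\<^sub>R x\<^sub>1)"
    using greater by (simp add: scaleR_add_right)
  then have "norm (inverse t *\<^sub>R y + x\<^sub>1) = norm (y + t *\<^sub>R x\<^sub>1) / t"
    using greater by (simp add: divide_inverse mult.commute)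
  ultimately show ?thesis using greater by (simp add: field_simps)
qed (use norming_graph_le \<open>(y, a) \<in> G\<close> in simp)

lemma norming_graph_extend:
  assumes "x\<^sub>1 \<notin> fst ` G"
  shows "\<exists>G'. norming_graph v G' \<and> G \<subset> G'"
proof -
  obtain c where lower: "\<And>y a. (y, a) \<in> G \<Longrightarrow> a - norm (y - x\<^sub>1) \<le> c"
    and upper: "\<And>z b. (z, b) \<in> G \<Longrightarrow> c \<le> norm (z + x\<^sub>1) - b"
    by (rule norming_graph_extension_constant[of x\<^sub>1]) blast
  define G' where "G' = {(y + t *\<^sub>R x\<^sub>1, a + t * c) | y a t. (y, a) \<in> G}"
  have "norming_graph v G'"
    unfolding norming_graph_def
  proof (intro conjI allI impI)
    show "(v, norm v) \<in> G'"
      unfolding G'_def using norming_graph_base by force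
    show "(x + y, a + b) \<in> G'" if xa: "(x, a) \<in> G'" and yb: "(y, b) \<in> G'" for x a y b
    proof -
      obtain x' a' t y' b' t' where "(x', a') \<in> G" "(y', b') \<in> G"
        and "x = x' + t *\<^sub>R x\<^sub>1" "a = a' + t * c" "y = y' + t' *\<^sub>R x\<^sub>1" "b = b' + t' * c"
        using xa yb unfolding G'_def by blast
      moreover have "(x' + y', a' + b') \<in> G"
        by (rule norming_graph_add) fact+
      ultimately have "(x + y, a + b) = ((x' + y') + (t + t') *\<^sub>R x\<^sub>1, (a' + b') + (t + t') * c)"
        "(x' + y', a' + b') \<in> G"
        by (simp_all add: algebra_simps)
      then show ?thesis
        unfolding G'_def by blast
    qed
    show "(r *\<^sub>R x, r * a) \<in> G'" if xa: "(x, a) \<in> G'" for x a r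
    proof -
      obtain x' a' t where "(x', a') \<in> G" "x = x' + t *\<^sub>R x\<^sub>1" "a = a' + t * c"
        using xa unfolding G'_def by blast
      moreover have "(r *\<^sub>R x', r * a') \<in> G"
        by (rule norming_graph_scale) fact
      ultimately have "(r *\<^sub>R x, r * a) = (r *\<^sub>R x' + (r * t) *\<^sub>R x\<^sub>1, r * a' + (r * t) * c)"
        "(r *\<^sub>R x', r * a') \<in> G"
        by (simp_all add: algebra_simps)
      then show ?thesis
        unfolding G'_def by blast
    qed
    show "a \<le> norm x" if "(x, a) \<in> G'" for x a
      using that norming_graph_extension_dominated[OF lower upper] unfolding G'_def by blast
  qed
  moreover have "G \<subseteq> G'"
    unfolding G'_def by (force intro: exI[of _ 0])
  moreover have "(x\<^sub>1, c) \<in> G'"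
    unfolding G'_def using norming_graph_zero by force
  ultimately show ?thesis using assms by force
qed

end

lemma norming_graph_Union_chain:
  assumes C: "C \<in> chains {G. norming_graph v G}" and "C \<noteq> {}"
  shows "norming_graph v (\<Union>C)"
proof -
  have graphs: "\<And>G. G \<in> C \<Longrightarrow> norming_graph v G" using chainsD2[OF C] by blast
  show ?thesis
    unfolding norming_graph_def
  proof (intro conjI allI impI)
    show "(v, norm v) \<in> \<Union>C"
      using \<open>C \<noteq> {}\<close> graphs norming_graph_base by blast
    show "(x + y, a + b) \<in> \<Union>C" if xa: "(x, a) \<in> \<Union>C" and yb: "(y, b) \<in> \<Union>C" for x a y b
    proof -
      obtain G H where "G \<in> C" "H \<in> C" "(x, a) \<in> G" "(y, b) \<in> H" using xa yb by blast
      moreover have "G \<subseteq> H \<or> H \<subseteq> G" using chainsD[OF C \<open>G \<in> C\<close> \<open>H \<in> C\<close>] .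
      ultimately show ?thesis using graphs norming_graph_add by blast
    qed
    show "(r *\<^sub>R x, r * a) \<in> \<Union>C" if "(x, a) \<in> \<Union>C" for x a r
      using that graphs norming_graph_scale by blast
    show "a \<le> norm x" if "(x, a) \<in> \<Union>C" for x a
      using that graphs norming_graph_le by blast
  qed
qed

theorem hahn_banach_norming_functional:
  fixes v :: "'a::real_normed_vector"
  obtains \<phi> :: "'a \<Rightarrow> real" where "linear \<phi>" and "\<And>x. \<bar>\<phi> x\<bar> \<le> norm x" and "\<phi> v = norm v"
proof -
  have "norming_graph v (range (\<lambda>r. (r *\<^sub>R v, r * norm v)))"
    unfolding norming_graph_def
  proof (intro conjI allI impI)
    show "(v, norm v) \<in> range (\<lambda>r. (r *\<^sub>R v, r * norm v))"
      using rangeI[of "\<lambda>r. (r *\<^sub>R v, r * norm v)" 1] by simp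
    show "(x + y, a + b) \<in> range (\<lambda>r. (r *\<^sub>R v, r * norm v))"
      if xa: "(x, a) \<in> range (\<lambda>r. (r *\<^sub>R v, r * norm v))"
        and yb: "(y, b) \<in> range (\<lambda>r. (r *\<^sub>R v, r * norm v))" for x a y b
    proof -
      obtain r s where "x = r *\<^sub>R v" "a = r * norm v" "y = s *\<^sub>R v" "b = s * norm v"
        using xa yb by blast
      then show ?thesis
        using rangeI[of "\<lambda>r. (r *\<^sub>R v, r * norm v)" "r + s"] by (simp add: scaleR_add_left distrib_right)
    qed
    show "(r *\<^sub>R x, r * a) \<in> range (\<lambda>r. (r *\<^sub>R v, r * norm v))"
      if xa: "(x, a) \<in> range (\<lambda>r. (r *\<^sub>R v, r * norm v))" for x a r
    proof -
      obtain s where "x = s *\<^sub>R v" "a = s * norm v"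
        using xa by blast
      then show ?thesis
        using rangeI[of "\<lambda>r. (r *\<^sub>R v, r * norm v)" "r * s"] by (simp add: mult.assoc)
    qed
    show "a \<le> norm x" if "(x, a) \<in> range (\<lambda>r. (r *\<^sub>R v, r * norm v))" for x a
      using that by (auto simp: mult_right_mono)
  qed
  then have "\<forall>C\<in>chains {G. norming_graph v G}. \<exists>U\<in>{G. norming_graph v G}. \<forall>X\<in>C. X \<subseteq> U"
    using norming_graph_Union_chain by (fastforce simp del: Union_iff)
  then obtain G where G: "norming_graph v G" and max: "\<forall>X\<in>{G. norming_graph v G}. G \<subseteq> X \<longrightarrow> X = G"
    using Zorn_Lemma2[of "{G. norming_graph v G}"] by blast
  have total: "x \<in> fst ` G" for x
    using norming_graph_extend[OF G, of x] max by blast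
  define \<phi> where "\<phi> x = (SOME a. (x, a) \<in> G)" for x
  have graph: "(x, \<phi> x) \<in> G" for x
  proof -
    obtain a where "(x, a) \<in> G" using total[of x] by auto
    then show ?thesis unfolding \<phi>_def by (rule someI)
  qed
  have graph_eq: "(x, a) \<in> G \<Longrightarrow> \<phi> x = a" for x a
    using norming_graph_functional[OF G graph] by blast
  show ?thesis
  proof
    show "linear \<phi>"
      by (rule linearI) (use graph_eq norming_graph_add[OF G graph graph] norming_graph_scale[OF G graph] in auto)
    show "\<bar>\<phi> x\<bar> \<le> norm x" for x
      using norming_graph_le[OF G graph, of x] norming_graph_le[OF G graph, of "- x"]
        graph_eq[OF norming_graph_scale[OF G graph[of x], of "-1"]] by simp
    show "\<phi> v = norm v"
      using graph_eq[OF norming_graph_base[OF G]] .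
  qed
qed

section \<open>Complex analysis\<close>

lemma quadratic_root_in_unit_disc:
  fixes \<zeta> :: complex
  assumes "\<not> (Im \<zeta> = 0 \<and> \<bar>Re \<zeta>\<bar> \<le> 1)"
  obtains z where "cmod z < 1" and "z\<^sup>2 - 2 * \<zeta> * z + 1 = 0"
proof -
  define w where "w = csqrt (\<zeta>\<^sup>2 - 1)"
  have w2: "w\<^sup>2 = \<zeta>\<^sup>2 - 1" unfolding w_def by simp
  have roots: "(\<zeta> - w)\<^sup>2 - 2 * \<zeta> * (\<zeta> - w) + 1 = 0" "(\<zeta> + w)\<^sup>2 - 2 * \<zeta> * (\<zeta> + w) + 1 = 0"
    using w2 by (simp_all add: power2_eq_square algebra_simps)
  have product: "(\<zeta> - w) * (\<zeta> + w) = 1"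
    using w2 by (simp add: power2_eq_square algebra_simps)
  then have norms: "cmod (\<zeta> - w) * cmod (\<zeta> + w) = 1"
    by (metis norm_mult norm_one)
  consider "cmod (\<zeta> - w) < 1" | "cmod (\<zeta> + w) < 1" | "cmod (\<zeta> - w) = 1"
  proof (cases "cmod (\<zeta> - w)" "1::real" rule: linorder_cases)
    case greater
    then have "cmod (\<zeta> + w) = 1 / cmod (\<zeta> - w)"
      using norms greater by (auto simp: eq_divide_eq mult.commute)
    also have "\<dots> < 1"
      using greater by (simp add: divide_less_eq)
    finally show ?thesis using that(2) by blast
  qed (use that in blast)+
  then show ?thesis
  proof cases
    case 3
    text \<open>Both roots on the unit circle: they are conjugate, so \<open>\<zeta>\<close> is their common real part.\<close>
    then have "(\<zeta> - w) * cnj (\<zeta> - w) = 1"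
      using complex_norm_square[of "\<zeta> - w"] by (metis of_real_1 power_one)
    then have "\<zeta> + w = cnj (\<zeta> - w)"
      using product by (metis mult.commute mult.left_neutral mult.assoc)
    then have "\<zeta> = of_real (Re (\<zeta> - w))"
      by (simp add: complex_eq_iff)
    moreover have "\<bar>Re (\<zeta> - w)\<bar> \<le> 1"
      using abs_Re_le_cmod[of "\<zeta> - w"] 3 by simp
    ultimately show ?thesis
      using assms by (metis Im_complex_of_real Re_complex_of_real)
  qed (use roots that in blast)+
qed

lemma quadratic_root_bounds:
  fixes z \<zeta> :: complex
  assumes z: "cmod z < 1" and root: "z\<^sup>2 - 2 * \<zeta> * z + 1 = 0" and "cmod \<zeta> \<le> 2"
  shows "1 / 5 \<le> cmod z" and "\<bar>Im \<zeta>\<bar> * cmod z \<le> 1 - cmod z"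
proof -
  define \<rho> where "\<rho> = cmod z"
  have "z \<noteq> 0" using root by auto
  then have \<rho>: "0 < \<rho>" "\<rho> < 1" using z by (auto simp: \<rho>_def)
  have zeta: "2 * \<zeta> = z + inverse z"
    using root \<open>z \<noteq> 0\<close> by (simp add: field_simps power2_eq_square)
  have "1 / \<rho> - \<rho> \<le> cmod (z + inverse z)"
    using norm_diff_ineq[of "inverse z" z] by (simp add: \<rho>_def norm_inverse divide_inverse add.commute)
  also have "\<dots> \<le> 4"
    using zeta[symmetric] \<open>cmod \<zeta> \<le> 2\<close> by (simp add: norm_mult)
  finally have "1 \<le> (4 + \<rho>) * \<rho>" using \<rho> by (simp add: field_simps)
  also have "\<dots> \<le> 5 * \<rho>" using \<rho> by (intro mult_right_mono) auto
  finally show "1 / 5 \<le> cmod z" unfolding \<rho>_def by simp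
  have "2 * Im \<zeta> = Im z - Im z / \<rho>\<^sup>2"
    using arg_cong[OF zeta, of Im] by (simp add: \<rho>_def cmod_def power2_eq_square divide_inverse)
  then have "2 * Im \<zeta> * \<rho>\<^sup>2 = Im z * (\<rho>\<^sup>2 - 1)"
    using \<rho> by (simp add: field_simps)
  then have "\<bar>2 * Im \<zeta> * \<rho>\<^sup>2\<bar> = \<bar>Im z * (\<rho>\<^sup>2 - 1)\<bar>"
    by simp
  moreover have "\<rho>\<^sup>2 \<le> 1"
    using \<rho> by (simp add: power_le_one)
  ultimately have "2 * \<bar>Im \<zeta>\<bar> * \<rho>\<^sup>2 = \<bar>Im z\<bar> * (1 - \<rho>\<^sup>2)"
    by (simp add: abs_mult)
  also have "\<dots> \<le> \<rho> * (1 - \<rho>\<^sup>2)"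
    using abs_Im_le_cmod[of z] \<open>\<rho>\<^sup>2 \<le> 1\<close> by (intro mult_right_mono) (auto simp: \<rho>_def)
  also have "\<dots> \<le> \<rho> * (2 * (1 - \<rho>))"
  proof (intro mult_left_mono)
    have "0 \<le> (1 - \<rho>)\<^sup>2" by simp
    then show "1 - \<rho>\<^sup>2 \<le> 2 * (1 - \<rho>)" by (simp add: power2_eq_square algebra_simps)
  qed (use \<rho> in simp)
  finally show "\<bar>Im \<zeta>\<bar> * cmod z \<le> 1 - cmod z"
    using \<rho> by (simp add: \<rho>_def power2_eq_square)
qed

lemma entire_vanishes_at_origin:
  fixes g :: "complex \<Rightarrow> complex"
  assumes holo: "g holomorphic_on UNIV"
    and growth: "\<And>r s. 1 \<le> r \<Longrightarrow> cmod s = r \<Longrightarrow> cmod (g s * (s\<^sup>2 - (of_real r)\<^sup>2)\<^sup>2) \<le> C * r ^ 3"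
  shows "g 0 = 0"
proof -
  have "0 \<le> C"
    using growth[of 1 1] by simp
  text \<open>Cauchy's formula for \<open>g s (s\<^sup>2 - r\<^sup>2)\<^sup>2\<close> on the circle of radius \<open>r\<close> gives
    \<open>|g 0| r\<^sup>4 \<le> C r\<^sup>3\<close>.\<close>
  have bound: "cmod (g 0) * r \<le> C" if "1 \<le> r" for r :: real
  proof -
    define \<Phi> where "\<Phi> s = g s * (s\<^sup>2 - (of_real r)\<^sup>2)\<^sup>2" for s
    have "\<Phi> holomorphic_on cball 0 r"
      unfolding \<Phi>_def by (intro holomorphic_intros holomorphic_on_subset[OF holo]) auto
    then have "((\<lambda>s. \<Phi> s / (s - 0)) has_contour_integral (2 * of_real pi * \<i> * \<Phi> 0)) (circlepath 0 r)"
      by (rule Cauchy_integral_circlepath_simple) (use that in simp)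
    moreover have "cmod (\<Phi> s / (s - 0)) \<le> C * r\<^sup>2" if "cmod (s - 0) = r" for s
      using growth[OF \<open>1 \<le> r\<close>, of s] that \<open>1 \<le> r\<close>
      by (simp add: \<Phi>_def norm_divide divide_le_eq power2_eq_square power3_eq_cube mult_ac)
    ultimately have "cmod (2 * of_real pi * \<i> * \<Phi> 0) \<le> C * r\<^sup>2 * (2 * pi * r)"
      using that \<open>0 \<le> C\<close> by (intro has_contour_integral_bound_circlepath) auto
    then show ?thesis
      using that by (simp add: \<Phi>_def norm_mult norm_power power2_eq_square power3_eq_cube mult_ac)
  qed
  have "(\<lambda>n. C / real (Suc n)) \<longlonglongrightarrow> 0"
    using LIMSEQ_Suc[OF lim_const_over_n[of C]] by simp
  moreover have "cmod (g 0) \<le> C / real (Suc n)" for n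
    using bound[of "real (Suc n)"] by (simp add: field_simps)
  ultimately have "cmod (g 0) \<le> 0"
    by (intro LIMSEQ_le_const) auto
  then show ?thesis by simp
qed

section \<open>Banach algebras with a complex structure\<close>

locale complex_structure =
  fixes j :: "'a::{real_normed_algebra_1, banach, comm_ring_1}"
  assumes j_squared: "j * j = - 1"
    and norm_complex_combination: "\<And>a b x. norm (a *\<^sub>R x + b *\<^sub>R (j * x)) = cmod (Complex a b) * norm x"
begin

definition of_complex :: "complex \<Rightarrow> 'a" where
  "of_complex z = of_real (Re z) + of_real (Im z) * j"

lemma of_complex_mult_eq: "of_complex z * x = Re z *\<^sub>R x + Im z *\<^sub>R (j * x)"
  by (simp add: of_complex_def distrib_right scaleR_conv_of_real mult.assoc)

lemma norm_of_complex_mult: "norm (of_complex z * x) = cmod z * norm x"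
  using norm_complex_combination[of "Re z" x "Im z"] by (simp add: of_complex_mult_eq)

lemma norm_of_complex: "norm (of_complex z) = cmod z"
  using norm_of_complex_mult[of z 1] by simp

lemma norm_j_mult: "norm (j * x) = norm x"
  using norm_complex_combination[of 0 x 1] by (simp add: complex_norm)

lemma of_complex_add: "of_complex (z + w) = of_complex z + of_complex w"
  and of_complex_diff: "of_complex (z - w) = of_complex z - of_complex w"
  by (simp_all add: of_complex_def algebra_simps)

lemma of_complex_mult: "of_complex (z * w) = of_complex z * of_complex w"
proof -
  have "of_complex z * of_complex w = of_real (Re z * Re w) + of_real (Re z * Im w + Im z * Re w) * j
      + of_real (Im z * Im w) * (j * j)"
    by (simp add: of_complex_def algebra_simps)
  then show ?thesis
    by (simp add: j_squared of_complex_def algebra_simps)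
qed

lemma of_complex_of_real [simp]: "of_complex (complex_of_real r) = of_real r"
  by (simp add: of_complex_def)

lemma of_complex_1 [simp]: "of_complex 1 = 1"
  and of_complex_0 [simp]: "of_complex 0 = 0"
  and of_complex_numeral [simp]: "of_complex (numeral n) = numeral n"
  using of_complex_of_real[of 1] of_complex_of_real[of 0] of_complex_of_real[of "numeral n"] by simp_all

lemma of_complex_power: "of_complex (z ^ n) = of_complex z ^ n"
  by (induction n) (simp_all add: of_complex_mult)

text \<open>The bound 2 is what complexifying a real functional \<open>\<phi>\<close> of norm 1 as
  \<open>x \<mapsto> \<phi> x - i \<phi> (j x)\<close> yields.\<close>
definition complex_functional :: "('a \<Rightarrow> complex) \<Rightarrow> bool" where
  "complex_functional \<psi> \<longleftrightarrow> (\<forall>x y. \<psi> (x + y) = \<psi> x + \<psi> y)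
     \<and> (\<forall>z x. \<psi> (of_complex z * x) = z * \<psi> x) \<and> (\<forall>x. cmod (\<psi> x) \<le> 2 * norm x)"

lemma complex_functional_separating:
  assumes "v \<noteq> 0"
  obtains \<psi> where "complex_functional \<psi>" and "\<psi> v \<noteq> 0"
proof -
  obtain \<phi> :: "'a \<Rightarrow> real" where "linear \<phi>" and bound: "\<And>x. \<bar>\<phi> x\<bar> \<le> norm x" and "\<phi> v = norm v"
    by (rule hahn_banach_norming_functional[of v]) blast
  interpret \<phi>: linear \<phi> by fact
  define \<psi> where "\<psi> x = Complex (\<phi> x) (- \<phi> (j * x))" for x
  have "complex_functional \<psi>"
    unfolding complex_functional_def
  proof (intro conjI allI)
    show "\<psi> (x + y) = \<psi> x + \<psi> y" for x y
      by (simp add: \<psi>_def \<phi>.add distrib_left complex_eq_iff)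
    show "\<psi> (of_complex z * x) = z * \<psi> x" for z x
    proof -
      have "j * (j * x) = - x"
        using j_squared by (simp flip: mult.assoc)
      then have "j * (of_complex z * x) = Re z *\<^sub>R (j * x) - Im z *\<^sub>R x"
        by (simp add: of_complex_mult_eq distrib_left)
      then have "\<phi> (j * (of_complex z * x)) = Re z * \<phi> (j * x) - Im z * \<phi> x"
        by (simp add: \<phi>.diff \<phi>.scale)
      moreover have "\<phi> (of_complex z * x) = Re z * \<phi> x + Im z * \<phi> (j * x)"
        by (simp add: of_complex_mult_eq \<phi>.add \<phi>.scale)
      ultimately show ?thesis
        by (simp add: \<psi>_def complex_eq_iff right_diff_distrib)
    qed
    show "cmod (\<psi> x) \<le> 2 * norm x" for x
      using cmod_le[of "\<psi> x"] bound[of x] bound[of "j * x"] by (simp add: \<psi>_def norm_j_mult)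
  qed
  moreover have "\<psi> v \<noteq> 0"
    using assms \<open>\<phi> v = norm v\<close> by (simp add: \<psi>_def complex_eq_iff)
  ultimately show ?thesis by (rule that)
qed

lemma complex_functional_add: "complex_functional \<psi> \<Longrightarrow> \<psi> (x + y) = \<psi> x + \<psi> y"
  and complex_functional_mult: "complex_functional \<psi> \<Longrightarrow> \<psi> (of_complex z * x) = z * \<psi> x"
  and complex_functional_bound: "complex_functional \<psi> \<Longrightarrow> cmod (\<psi> x) \<le> 2 * norm x"
  unfolding complex_functional_def by blast+

lemma complex_functional_bounded_linear:
  assumes "complex_functional \<psi>"
  shows "bounded_linear \<psi>"
proof (rule bounded_linear_intro[where K = 2])
  show "\<psi> (x + y) = \<psi> x + \<psi> y" for x y
    by (rule complex_functional_add[OF assms])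
  show "\<psi> (r *\<^sub>R x) = r *\<^sub>R \<psi> x" for r x
    using complex_functional_mult[OF assms, of "complex_of_real r" x]
    by (simp add: scaleR_conv_of_real)
  show "norm (\<psi> x) \<le> norm x * 2" for x
    using complex_functional_bound[OF assms, of x] by (simp add: mult.commute)
qed

lemma complex_functional_diff: "complex_functional \<psi> \<Longrightarrow> \<psi> (x - y) = \<psi> x - \<psi> y"
  by (rule linear_diff[OF bounded_linear.linear[OF complex_functional_bounded_linear]])

lemma resolvent_identity:
  assumes "\<And>s. (A - of_complex s * B) dvd 1"
  defines "R \<equiv> \<lambda>t. unit_inverse (A - of_complex t * B)"
  shows "R t - R s = of_complex (t - s) * (R t * B * R s)"
proof -
  have "R t - R s = R t * (A - of_complex s * B) * R s - R t * (A - of_complex t * B) * R s"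
    using unit_inverse_right[OF assms(1)] unit_inverse_left[OF assms(1)]
    by (simp add: R_def mult.assoc)
  also have "\<dots> = of_complex (t - s) * (R t * B * R s)"
    by (simp add: of_complex_diff algebra_simps)
  finally show ?thesis .
qed

lemma resolvent_continuous:
  assumes units: "\<And>s. (A - of_complex s * B) dvd 1"
  defines "R \<equiv> \<lambda>t. unit_inverse (A - of_complex t * B)"
  shows "(R \<longlongrightarrow> R s) (at s)"
proof -
  define m where "m = norm B * norm (R s)"
  have "0 \<le> m" by (simp add: m_def)
  have bound: "norm (R t - R s) \<le> cmod (t - s) * m * norm (R t)" for t
  proof -
    have "norm (R t - R s) = cmod (t - s) * norm (R t * B * R s)"
      using resolvent_identity[OF units] by (simp add: R_def norm_of_complex_mult)
    also have "\<dots> \<le> cmod (t - s) * (norm (R t) * norm B * norm (R s))"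
      by (intro mult_left_mono order.trans[OF norm_mult_ineq] mult_right_mono norm_mult_ineq) auto
    finally show ?thesis by (simp add: m_def mult_ac)
  qed
  have "\<forall>\<^sub>F t in at s. dist t s < 1 / (2 * m + 1)"
    using \<open>0 \<le> m\<close> by (auto simp: eventually_at intro!: exI[of _ "1 / (2 * m + 1)"])
  then have "\<forall>\<^sub>F t in at s. norm (R t - R s) \<le> cmod (t - s) * (2 * m * norm (R s))"
  proof (rule eventually_mono)
    fix t assume "dist t s < 1 / (2 * m + 1)"
    then have "cmod (t - s) < 1 / (2 * m + 1)"
      by (simp add: dist_norm)
    then have "cmod (t - s) * m \<le> 1 / (2 * m + 1) * m"
      using \<open>0 \<le> m\<close> by (intro mult_right_mono) auto
    also have "\<dots> \<le> 1 / 2"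
      using \<open>0 \<le> m\<close> by (simp add: field_simps)
    finally have small: "cmod (t - s) * m \<le> 1 / 2" .
    have "norm (R t) \<le> norm (R s) + norm (R t - R s)"
      by (rule norm_triangle_sub)
    also have "\<dots> \<le> norm (R s) + 1 / 2 * norm (R t)"
      using bound[of t] small mult_right_mono[OF small norm_ge_zero[of "R t"]] by simp
    finally have "norm (R t) \<le> 2 * norm (R s)" by simp
    then show "norm (R t - R s) \<le> cmod (t - s) * (2 * m * norm (R s))"
      using bound[of t] mult_left_mono[of "norm (R t)" "2 * norm (R s)" "cmod (t - s) * m"]
      by (simp add: m_def mult_ac)
  qed
  moreover have "((\<lambda>t. cmod (t - s) * (2 * m * norm (R s))) \<longlongrightarrow> 0) (at s)"
    by (intro tendsto_mult_left_zero tendsto_eq_intros) auto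
  ultimately have "((\<lambda>t. R t - R s) \<longlongrightarrow> 0) (at s)"
    by (rule Lim_null_comparison)
  then show ?thesis
    by (simp add: LIM_zero_iff)
qed

lemma resolvent_functional_holomorphic:
  assumes units: "\<And>s. (A - of_complex s * B) dvd 1" and \<psi>: "complex_functional \<psi>"
  shows "(\<lambda>t. \<psi> (P * unit_inverse (A - of_complex t * B))) holomorphic_on S"
proof -
  define R where "R t = unit_inverse (A - of_complex t * B)" for t
  have "((\<lambda>t. \<psi> (P * R t)) has_field_derivative \<psi> (P * R s * B * R s)) (at s)" for s
  proof -
    have quotient: "(\<psi> (P * R t) - \<psi> (P * R s)) / (t - s) = \<psi> (P * R t * B * R s)" if "t \<noteq> s" for t
    proof -
      have "\<psi> (P * R t) - \<psi> (P * R s) = \<psi> (of_complex (t - s) * (P * R t * B * R s))"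
        using resolvent_identity[OF units, of t s]
        by (simp add: R_def complex_functional_diff[OF \<psi>, symmetric] right_diff_distrib[symmetric] mult_ac)
      then show ?thesis
        using that by (simp add: complex_functional_mult[OF \<psi>])
    qed
    have "((\<lambda>t. P * R t * B * R s) \<longlongrightarrow> P * R s * B * R s) (at s)"
      using resolvent_continuous[OF units, of s] unfolding R_def by (intro tendsto_intros)
    then have "((\<lambda>t. \<psi> (P * R t * B * R s)) \<longlongrightarrow> \<psi> (P * R s * B * R s)) (at s)"
      by (rule bounded_linear.tendsto[OF complex_functional_bounded_linear[OF \<psi>]])
    then have "((\<lambda>t. (\<psi> (P * R t) - \<psi> (P * R s)) / (t - s)) \<longlongrightarrow> \<psi> (P * R s * B * R s)) (at s)"
      by (rule Lim_transform_eventually) (auto simp: eventually_at_filter quotient)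
    then show ?thesis
      by (simp add: has_field_derivative_iff)
  qed
  then show ?thesis
    unfolding R_def holomorphic_on_def field_differentiable_def
    by (blast intro: has_field_derivative_at_within)
qed

text \<open>Gelfand--Mazur: otherwise a separating functional applied to the resolvent would give an
  entire function vanishing at infinity, but not at 0.\<close>
lemma spectrum_nonempty: "\<exists>l. \<not> (y - of_complex l) dvd 1"
proof (rule ccontr)
  assume "\<nexists>l. \<not> (y - of_complex l) dvd 1"
  then have units: "\<And>s. (y - of_complex s * 1) dvd 1" by simp
  define R where "R s = unit_inverse (y - of_complex s * 1)" for s
  have "R 0 \<noteq> 0"
    using unit_inverse_right[OF units, of 0] by (auto simp: R_def)
  then obtain \<psi> where \<psi>: "complex_functional \<psi>" and "\<psi> (R 0) \<noteq> 0"
    by (rule complex_functional_separating)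
  have bound: "norm (R s) \<le> 1 / (cmod s - norm y)" if "cmod s > norm y" for s
  proof -
    have "of_complex s * R s = y * R s - 1"
      using unit_inverse_right[OF units, of s] by (simp add: R_def algebra_simps)
    then have "cmod s * norm (R s) = norm (y * R s - 1)"
      by (simp flip: norm_of_complex_mult)
    also have "\<dots> \<le> norm y * norm (R s) + 1"
      using norm_triangle_ineq4[of "y * R s" 1] norm_mult_ineq[of y "R s"] by simp
    finally have "cmod s * norm (R s) \<le> norm y * norm (R s) + 1" .
    then show ?thesis
      using that by (simp add: field_simps)
  qed
  have lim: "((\<lambda>s. 2 / (cmod s - norm y)) \<longlongrightarrow> 0) at_infinity"
    by (intro tendsto_divide_0[OF tendsto_const] filterlim_at_top_imp_at_infinity
        filterlim_tendsto_add_at_top[OF tendsto_const filterlim_norm_at_top, of "- norm y", simplified])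
  have "\<forall>\<^sub>F s in at_infinity. norm (\<psi> (1 * R s)) \<le> 2 / (cmod s - norm y)"
    unfolding eventually_at_infinity
  proof (intro exI allI impI)
    fix s :: complex assume "norm y + 1 \<le> norm s"
    have "norm (\<psi> (R s)) \<le> 2 * norm (R s)"
      by (rule complex_functional_bound[OF \<psi>])
    also have "\<dots> \<le> 2 * (1 / (cmod s - norm y))"
      using bound[of s] \<open>norm y + 1 \<le> norm s\<close> by simp
    finally show "norm (\<psi> (1 * R s)) \<le> 2 / (cmod s - norm y)" by simp
  qed
  then have "((\<lambda>s. \<psi> (1 * R s)) \<longlongrightarrow> 0) at_infinity"
    using lim by (rule Lim_null_comparison)
  then have "\<psi> (1 * R 0) = 0"
    using Liouville_weak resolvent_functional_holomorphic[OF units \<psi>, of 1 UNIV]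
    unfolding R_def by blast
  with \<open>\<psi> (R 0) \<noteq> 0\<close> show False by simp
qed

text \<open>\<open>s\<^sup>2 \<psi> (u\<^sup>2 R(s))\<close> is controlled by the resolvent \<open>R(s)\<close>, and on the circle \<open>|s| = r\<close> the
  factor \<open>(s\<^sup>2 - r\<^sup>2)\<^sup>2 = -4 (Im s)\<^sup>2 s\<^sup>2\<close> absorbs its growth near the real axis.\<close>
lemma square_zero_of_resolvent_growth:
  assumes units: "\<And>s. (1 - of_complex s * u) dvd 1"
    and growth: "\<And>s r. 1 \<le> r \<Longrightarrow> cmod s = r \<Longrightarrow> Im s \<noteq> 0 \<Longrightarrow>
                   norm (unit_inverse (1 - of_complex s * u)) * (Im s)\<^sup>2 \<le> Q * r ^ 3"
  shows "u * u = 0"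
proof (rule ccontr)
  assume "u * u \<noteq> 0"
  then obtain \<psi> where \<psi>: "complex_functional \<psi>" and "\<psi> (u * u) \<noteq> 0"
    by (rule complex_functional_separating)
  define R where "R s = unit_inverse (1 - of_complex s * u)" for s
  define g where "g s = \<psi> (u * u * R s)" for s
  have "norm (R \<i>) * (Im \<i>)\<^sup>2 \<le> Q * 1 ^ 3"
    unfolding R_def by (rule growth) auto
  then have "norm (R \<i>) \<le> Q"
    by simp
  then have "0 \<le> Q"
    by (rule order_trans[OF norm_ge_zero])
  define C where "C = 8 * Q + 8 + 8 * norm u"
  have "cmod (g s * (s\<^sup>2 - (of_real r)\<^sup>2)\<^sup>2) \<le> C * r ^ 3" if r: "1 \<le> r" and s: "cmod s = r" for r s
  proof -
    have "(Re s)\<^sup>2 + (Im s)\<^sup>2 = r\<^sup>2"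
      using cmod_power2[of s] s by simp
    then have "s\<^sup>2 - (of_real r)\<^sup>2 = 2 * \<i> * of_real (Im s) * s"
      by (simp add: complex_eq_iff power2_eq_square algebra_simps)
    then have factor: "cmod ((s\<^sup>2 - (of_real r)\<^sup>2)\<^sup>2) = 4 * (Im s)\<^sup>2 * r\<^sup>2"
      by (simp add: norm_mult norm_power s power_mult_distrib)
    have "s\<^sup>2 * g s = \<psi> (of_complex (s\<^sup>2) * (u * u * R s))"
      by (simp add: g_def complex_functional_mult[OF \<psi>])
    also have "\<dots> = \<psi> (R s - 1 - of_complex s * u)"
      using resolvent_square_identity[OF unit_inverse_right[OF units], of s]
      by (simp add: R_def of_complex_power)
    also have "\<dots> = \<psi> (R s) - \<psi> 1 - s * \<psi> u"
      by (simp add: complex_functional_diff[OF \<psi>] complex_functional_mult[OF \<psi>])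
    finally have "cmod (s\<^sup>2 * g s) = cmod (\<psi> (R s) - \<psi> 1 - s * \<psi> u)"
      by simp
    then have "r\<^sup>2 * cmod (g s) = cmod (\<psi> (R s) - \<psi> 1 - s * \<psi> u)"
      by (simp add: norm_mult norm_power s)
    also have "\<dots> \<le> cmod (\<psi> (R s)) + cmod (\<psi> 1) + r * cmod (\<psi> u)"
      using norm_triangle_ineq4[of "\<psi> (R s) - \<psi> 1" "s * \<psi> u"] norm_triangle_ineq4[of "\<psi> (R s)" "\<psi> 1"] s
      by (simp add: norm_mult)
    also have "\<dots> \<le> 2 * norm (R s) + 2 + r * (2 * norm u)"
      using complex_functional_bound[OF \<psi>, of "R s"] complex_functional_bound[OF \<psi>, of 1]
        complex_functional_bound[OF \<psi>, of u] r
      by (intro add_mono mult_left_mono) auto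
    finally have "r\<^sup>2 * cmod (g s) \<le> 2 * norm (R s) + 2 + r * (2 * norm u)" .
    have "cmod (g s * (s\<^sup>2 - (of_real r)\<^sup>2)\<^sup>2) = 4 * (Im s)\<^sup>2 * (r\<^sup>2 * cmod (g s))"
      unfolding norm_mult factor by (simp add: mult_ac)
    also have "\<dots> \<le> 4 * (Im s)\<^sup>2 * (2 * norm (R s) + 2 + r * (2 * norm u))"
      using \<open>r\<^sup>2 * cmod (g s) \<le> _\<close> by (intro mult_left_mono) auto
    also have "\<dots> = 8 * (norm (R s) * (Im s)\<^sup>2) + 8 * (Im s)\<^sup>2 * (1 + r * norm u)"
      by (simp add: algebra_simps)
    also have "\<dots> \<le> 8 * (Q * r ^ 3) + 8 * r\<^sup>2 * (1 + r * norm u)"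
    proof (intro add_mono mult_left_mono mult_right_mono)
      show "norm (R s) * (Im s)\<^sup>2 \<le> Q * r ^ 3"
        using growth[OF r s] \<open>0 \<le> Q\<close> r by (cases "Im s = 0") (simp_all add: R_def)
      show "(Im s)\<^sup>2 \<le> r\<^sup>2"
        using power_mono[OF abs_Im_le_cmod[of s] abs_ge_zero, of 2] s by simp
    qed (use r in auto)
    also have "\<dots> \<le> C * r ^ 3"
      using r power_increasing[of 2 3 r] by (simp add: C_def algebra_simps power2_eq_square power3_eq_cube)
    finally show ?thesis .
  qed
  moreover have "g holomorphic_on UNIV"
    unfolding g_def R_def by (rule resolvent_functional_holomorphic[OF units \<psi>])
  ultimately have "g 0 = 0"
    by (intro entire_vanishes_at_origin)
  then show False
    using \<open>\<psi> (u * u) \<noteq> 0\<close> by (simp add: g_def R_def unit_inverse_eqI[of 1 1])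
qed

end

section \<open>Bounded Chebyshev sequences\<close>

locale bounded_chebyshev = complex_structure j for j :: "'a::{real_normed_algebra_1, banach, comm_ring_1}" +
  fixes y :: 'a and K :: real
  assumes norm_chebyshev_T_le: "\<And>n. norm (chebyshev_T n y) \<le> K"
begin

lemma one_le_K: "1 \<le> K"
  using norm_chebyshev_T_le[of 0] by simp

lemma norm_chebyshev_U_le: "norm (chebyshev_U n y) \<le> 2 * real n * K"
proof (induction n rule: induct_nat_012)
  case (ge2 n)
  have "norm (chebyshev_U (Suc (Suc n)) y) \<le> norm (chebyshev_U n y) + norm (2 * chebyshev_T (Suc n) y)"
    unfolding chebyshev_U_Suc_Suc_eq_T by (rule norm_triangle_ineq)
  also have "\<dots> \<le> 2 * real n * K + 2 * K"
    using ge2(1) norm_mult_ineq[of 2 "chebyshev_T (Suc n) y"] norm_chebyshev_T_le[of "Suc n"] by simp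
  finally show ?case
    using one_le_K by (simp add: algebra_simps)
qed (use one_le_K in simp_all)

text \<open>If \<open>\<zeta> = (z + 1/z) / 2\<close> with \<open>|z| < 1\<close>, the generating function of the \<open>U\<^sub>n(y)\<close> at \<open>z\<close>
  inverts \<open>\<zeta> - y\<close>.\<close>
lemma resolvent_at_root:
  assumes z: "cmod z < 1" and root: "z\<^sup>2 - 2 * \<zeta> * z + 1 = 0"
  shows "(of_complex \<zeta> - y) dvd 1"
    and "norm (unit_inverse (of_complex \<zeta> - y)) \<le> 4 * K * cmod z / (1 - cmod z)\<^sup>2"
proof -
  define \<rho> where "\<rho> = cmod z"
  define w where "w = of_complex z"
  define f where "f n = chebyshev_U (Suc n) y * w ^ n" for n
  have \<rho>: "0 \<le> \<rho>" "\<rho> < 1" using z by (auto simp: \<rho>_def)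
  have norm_f: "norm (f n) \<le> 2 * K * (real (Suc n) * \<rho> ^ n)" for n
  proof -
    have "norm (f n) \<le> norm (chebyshev_U (Suc n) y) * \<rho> ^ n"
      using norm_mult_ineq[of "chebyshev_U (Suc n) y" "w ^ n"]
      by (simp add: f_def w_def \<rho>_def norm_of_complex norm_power flip: of_complex_power)
    also have "\<dots> \<le> 2 * real (Suc n) * K * \<rho> ^ n"
      using norm_chebyshev_U_le[of "Suc n"] \<rho> by (intro mult_right_mono) auto
    finally show ?thesis by (simp add: mult_ac)
  qed
  have geometric: "(\<lambda>n. real (Suc n) * \<rho> ^ n) sums (1 / (1 - \<rho>)\<^sup>2)"
    using geometric_deriv_sums[of \<rho>] \<rho> by simp
  then have "summable (\<lambda>n. 2 * K * (real (Suc n) * \<rho> ^ n))"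
    by (intro summable_mult) (auto simp: sums_iff)
  then have "summable f"
    by (rule summable_comparison_test[rotated]) (use norm_f in auto)
  have "(1 - 2 * y * w + w\<^sup>2) * suminf f = 1"
    using chebyshev_U_generating_function[OF \<open>summable f\<close>[unfolded f_def[abs_def]]]
    unfolding f_def[abs_def] .
  moreover have "1 - 2 * y * w + w\<^sup>2 = (of_complex \<zeta> - y) * of_complex (2 * z)"
  proof -
    have "of_complex (2 * \<zeta> * z) = of_complex (z\<^sup>2 + 1)"
      using root by (simp add: algebra_simps)
    then show ?thesis
      by (simp add: w_def of_complex_mult of_complex_add of_complex_power algebra_simps)
  qed
  ultimately have inverse: "(of_complex \<zeta> - y) * (of_complex (2 * z) * suminf f) = 1"
    by (simp add: mult.assoc)
  then show "(of_complex \<zeta> - y) dvd 1"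
    by (auto intro: dvdI[of _ _ "of_complex (2 * z) * suminf f"])
  have "norm (suminf f) \<le> 2 * K * (1 / (1 - \<rho>)\<^sup>2)"
    using norm_suminf_le[OF norm_f \<open>summable (\<lambda>n. 2 * K * _)\<close>] geometric
    by (simp add: suminf_mult sums_iff)
  then have "2 * \<rho> * norm (suminf f) \<le> 2 * \<rho> * (2 * K * (1 / (1 - \<rho>)\<^sup>2))"
    using \<rho> by (intro mult_left_mono) auto
  then show "norm (unit_inverse (of_complex \<zeta> - y)) \<le> 4 * K * cmod z / (1 - cmod z)\<^sup>2"
    unfolding unit_inverse_eqI[OF inverse] norm_of_complex_mult by (simp add: \<rho>_def mult_ac)
qed

lemma spectrum_in_interval:
  assumes "\<not> (y - of_complex l) dvd 1"
  shows "Im l = 0" and "\<bar>Re l\<bar> \<le> 1"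
proof -
  have "Im l = 0 \<and> \<bar>Re l\<bar> \<le> 1"
  proof (rule ccontr)
    assume "\<not> (Im l = 0 \<and> \<bar>Re l\<bar> \<le> 1)"
    then obtain z where "cmod z < 1" "z\<^sup>2 - 2 * l * z + 1 = 0"
      by (rule quadratic_root_in_unit_disc)
    then have "(of_complex l - y) dvd 1"
      by (rule resolvent_at_root)
    then show False
      using assms minus_dvd_iff[of "of_complex l - y" 1] by simp
  qed
  then show "Im l = 0" and "\<bar>Re l\<bar> \<le> 1" by auto
qed

lemma resolvent_bound_off_axis:
  assumes "Im \<zeta> \<noteq> 0" and "cmod \<zeta> \<le> 2"
  shows "(of_complex \<zeta> - y) dvd 1"
    and "norm (unit_inverse (of_complex \<zeta> - y)) * (Im \<zeta>)\<^sup>2 \<le> 20 * K"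
proof -
  obtain z where z: "cmod z < 1" and root: "z\<^sup>2 - 2 * \<zeta> * z + 1 = 0"
    using quadratic_root_in_unit_disc assms(1) by blast
  define \<rho> where "\<rho> = cmod z"
  define N where "N = norm (unit_inverse (of_complex \<zeta> - y))"
  have \<rho>: "1 / 5 \<le> \<rho>" "\<rho> < 1" "\<bar>Im \<zeta>\<bar> * \<rho> \<le> 1 - \<rho>"
    using quadratic_root_bounds[OF z root assms(2)] z unfolding \<rho>_def by auto
  show "(of_complex \<zeta> - y) dvd 1"
    by (rule resolvent_at_root(1)[OF z root])
  have "N * (1 - \<rho>)\<^sup>2 \<le> 4 * K * \<rho>"
    using resolvent_at_root(2)[OF z root] \<rho> by (simp add: N_def \<rho>_def field_simps)
  moreover have "N * (\<bar>Im \<zeta>\<bar> * \<rho>)\<^sup>2 \<le> N * (1 - \<rho>)\<^sup>2"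
    using \<rho> by (intro mult_left_mono power_mono) (auto simp: N_def)
  ultimately have "\<rho> * (N * (Im \<zeta>)\<^sup>2 * \<rho>) \<le> \<rho> * (4 * K)"
    by (simp add: power2_eq_square algebra_simps)
  then have "N * (Im \<zeta>)\<^sup>2 * \<rho> \<le> 4 * K"
    using \<rho> by (simp add: mult_le_cancel_left_pos)
  moreover have "N * (Im \<zeta>)\<^sup>2 * (1 / 5) \<le> N * (Im \<zeta>)\<^sup>2 * \<rho>"
    using \<rho> by (intro mult_left_mono) (auto simp: N_def)
  ultimately show "N * (Im \<zeta>)\<^sup>2 \<le> 20 * K" by simp
qed

text \<open>Near a real spectral value \<open>c\<close>: writing \<open>s = 1 / (\<zeta> - c)\<close> turns the bound off the real
  axis into a growth bound for the resolvent of \<open>u = y - c\<close>.\<close>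
lemma resolvent_growth:
  fixes c r :: real
  assumes "\<bar>c\<bar> \<le> 1" and r: "1 \<le> r" and s: "cmod s = r" and "Im s \<noteq> 0"
  defines "u \<equiv> y - of_real c"
  shows "norm (unit_inverse (1 - of_complex s * u)) * (Im s)\<^sup>2 \<le> 20 * K * r ^ 3"
proof -
  define \<zeta> where "\<zeta> = complex_of_real c + 1 / s"
  have "s \<noteq> 0" using s r by auto
  have Im_\<zeta>: "Im \<zeta> = - Im s / r\<^sup>2"
    using s by (simp add: \<zeta>_def Im_divide')
  have "cmod (1 / s) \<le> 1"
    using s r by (simp add: norm_divide)
  then have "cmod \<zeta> \<le> 2"
    unfolding \<zeta>_def using norm_triangle_ineq[of "complex_of_real c" "1 / s"] assms(1) by simp
  then obtain unit: "(of_complex \<zeta> - y) dvd 1"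
    and bound: "norm (unit_inverse (of_complex \<zeta> - y)) * (Im \<zeta>)\<^sup>2 \<le> 20 * K"
    using resolvent_bound_off_axis[of \<zeta>] Im_\<zeta> \<open>Im s \<noteq> 0\<close> r by auto
  have factor: "of_complex \<zeta> - y = of_complex (1 / s) * (1 - of_complex s * u)"
    using \<open>s \<noteq> 0\<close> by (simp add: \<zeta>_def u_def of_complex_add right_diff_distrib mult.assoc[symmetric]
        flip: of_complex_mult)
  have inverse: "(1 - of_complex s * u) * (of_complex (1 / s) * unit_inverse (of_complex \<zeta> - y)) = 1"
    using unit_inverse_right[OF unit] unfolding factor by (simp add: mult_ac)
  have "norm (unit_inverse (1 - of_complex s * u)) * (Im s)\<^sup>2
      = norm (unit_inverse (of_complex \<zeta> - y)) * (Im \<zeta>)\<^sup>2 * r ^ 3"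
    unfolding unit_inverse_eqI[OF inverse] norm_of_complex_mult Im_\<zeta> using s r
    by (simp add: norm_divide power2_eq_square power3_eq_cube field_simps)
  also have "\<dots> \<le> 20 * K * r ^ 3"
    using bound r by (intro mult_right_mono) auto
  finally show ?thesis .
qed

lemma scalar_in_local_algebra:
  fixes M :: "'a set"
  assumes "maximal_ideal M" and unique: "\<And>M'. maximal_ideal M' \<Longrightarrow> M' = M"
  obtains c where "\<bar>c\<bar> \<le> 1" and "y = of_real c"
proof -
  obtain l where "\<not> (y - of_complex l) dvd 1"
    using spectrum_nonempty by blast
  define c where "c = Re l"
  have "l = complex_of_real c" and "\<bar>c\<bar> \<le> 1"
    using spectrum_in_interval[OF \<open>\<not> _ dvd 1\<close>] by (simp_all add: c_def complex_eq_iff)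
  define u where "u = y - of_real c"
  have "u \<in> M"
    using unique_maximal_ideal_nonunit[OF unique] \<open>\<not> _ dvd 1\<close> \<open>l = _\<close> by (simp add: u_def)
  then have multiple: "of_complex s * u \<in> M" for s
    using assms(1) by (simp add: maximal_ideal_def ring_ideal_def)
  have units: "(1 - of_complex s * u) dvd 1" for s
    by (rule unique_maximal_ideal_one_minus_unit[OF assms multiple])
  have "norm (unit_inverse (1 - of_complex s * u)) * (Im s)\<^sup>2 \<le> 20 * K * r ^ 3"
    if "1 \<le> r" "cmod s = r" "Im s \<noteq> 0" for s r
    using resolvent_growth[OF \<open>\<bar>c\<bar> \<le> 1\<close> that] unfolding u_def .
  then have "u * u = 0"
    by (rule square_zero_of_resolvent_growth[OF units])
  moreover have "norm (chebyshev_T n (of_real c + u)) \<le> K" for n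
    using norm_chebyshev_T_le[of n] by (simp add: u_def)
  ultimately have "u = 0"
    by (rule chebyshev_bounded_square_zero_eq_0[OF \<open>\<bar>c\<bar> \<le> 1\<close>])
  then show ?thesis
    using that \<open>\<bar>c\<bar> \<le> 1\<close> unfolding u_def by simp
qed

end

lemma complex_algebra_structure_iff:
  "complex_algebra_structure TYPE('a::{real_normed_algebra_1, banach, comm_ring_1})
    \<longleftrightarrow> (\<exists>j :: 'a. complex_structure j)"
  unfolding complex_algebra_structure_def complex_structure_def by blast

lemma cosine_family_of_real_iff:
  "cosine_family (\<lambda>g. of_real (c g) :: 'a::{real_normed_algebra_1, comm_ring_1}) \<longleftrightarrow> cosine_family c"
  unfolding cosine_family_def
  by (metis (no_types, opaque_lifting) of_real_1 of_real_add of_real_eq_iff of_real_mult of_real_numeral)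

theorem corollary2p4:
  fixes C :: "'g::ab_group_add \<Rightarrow> 'a::{real_normed_algebra_1, banach, comm_ring_1}"
  assumes "complex_algebra_structure TYPE('a)"
    and "\<exists>!M::'a set. maximal_ideal M"
    and "cosine_family C"
    and "bounded_family C"
  shows "\<exists>c :: 'g \<Rightarrow> real. cosine_family c \<and> bounded_family c \<and> (\<forall>g. c g \<in> {-1..1})
           \<and> (\<forall>g. C g = of_real (c g))"
proof -
  obtain j :: 'a where "complex_structure j"
    using assms(1) complex_algebra_structure_iff by blast
  obtain M :: "'a set" where "maximal_ideal M" and unique: "\<And>M'. maximal_ideal M' \<Longrightarrow> M' = M"
    using assms(2) by blast
  obtain K where K: "\<And>g. norm (C g) \<le> K"
    using assms(4) unfolding bounded_family_def by blast
  have "\<exists>c. \<bar>c\<bar> \<le> 1 \<and> C g = of_real c" for g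
  proof -
    interpret bounded_chebyshev j "C g" K
      by unfold_locales (use \<open>complex_structure j\<close> in \<open>simp_all add: complex_structure_def K
          flip: cosine_family_multiple[OF assms(3)]\<close>)
    show ?thesis
      using scalar_in_local_algebra[OF \<open>maximal_ideal M\<close> unique] by metis
  qed
  then obtain c where c: "\<And>g. \<bar>c g\<bar> \<le> 1" and C: "\<And>g. C g = of_real (c g)"
    by metis
  have "cosine_family c"
    using assms(3) unfolding C cosine_family_of_real_iff .
  moreover have "bounded_family c"
    unfolding bounded_family_def using c by auto
  ultimately show ?thesis
    using c C by (auto simp: abs_le_iff)
qed

end
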